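(* Let $M\in\mathcal{I}$. Then $2\in M$ or $M$ is unbounded.
   Context: For a summable sequence $\mathbf{x}=(x_n)$ of positive reals, $\mathcal{A}(\mathbf{x})=\{\sum_{n\in A}x_n: A\subseteq\mathbb{N}\}$ is its achievement set and its cardinal function $f$ assigns to $x\in\mathcal{A}(\mathbf{x})$ the cardinality (a positive integer, $\omega$, or $\mathfrak{c}$) of $\{(\varepsilon_n)\in\{0,1\}^{\mathbb{N}}:\sum\varepsilon_nx_n=x\}$. $\mathcal{I}$ is the family of ranges of cardinal functions of such sequences whose achievement set is a finite union of (nondegenerate) closed intervals. A set $M\subseteq\{1,2,\dots\}\cup\{\omega,\mathfrak{c}\}$ is bounded if there is $N\in\mathbb{N}$ with $M\subseteq\{1,\dots,N\}$; otherwise it is unbounded. *)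

theory Defs
  imports "HOL-Analysis.Analysis"
begin

text \<open>Cardinal values: a positive integer, omega, or continuum.\<close>
datatype cardval = Fin nat | Omega | Cont

text \<open>Subsum of x over the index set A (A corresponds to the 0-1 sequence eps).\<close>
definition subsum :: "(nat \<Rightarrow> real) \<Rightarrow> nat set \<Rightarrow> real" where
  "subsum x A = (\<Sum>n. (if n \<in> A then x n else 0))"

definition achievement_set :: "(nat \<Rightarrow> real) \<Rightarrow> real set" where
  "achievement_set x = {subsum x A | A. True}"

definition cardv :: "'a set \<Rightarrow> cardval" where
  "cardv S = (if finite S then Fin (card S) else if countable S then Omega else Cont)"

definition cardinal_fun :: "(nat \<Rightarrow> real) \<Rightarrow> real \<Rightarrow> cardval" where
  "cardinal_fun x t = cardv {A :: nat set. subsum x A = t}"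

definition finite_union_of_intervals :: "real set \<Rightarrow> bool" where
  "finite_union_of_intervals S \<longleftrightarrow>
     (\<exists>F :: (real \<times> real) set. finite F \<and> (\<forall>(a,b)\<in>F. a < b) \<and>
        S = (\<Union>(a,b)\<in>F. {a..b}))"

definition I_family :: "cardval set set" where
  "I_family = {cardinal_fun x ` achievement_set x | x.
      (\<forall>n. x n > 0) \<and> summable x \<and> finite_union_of_intervals (achievement_set x)}"

definition bounded_cv :: "cardval set \<Rightarrow> bool" where
  "bounded_cv M \<longleftrightarrow> (\<exists>N::nat. M \<subseteq> Fin ` {1..N})"

end

theory Submission
  imports Defs
begin

text \<open>Rearranging the terms changes neither the achievement set nor the cardinal function, so
  the terms may be taken nonincreasing. The achievement set contains an interval \<open>[0, \<delta>]\<close>,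
  which forces every small term to be at most the sum of all later terms; by Kakeya's greedy
  algorithm each tail then realises every value between \<open>0\<close> and its sum. If infinitely many
  terms are strictly below the sum of the later ones, each of them can be used to split
  representations, and induction produces points near \<open>0\<close> with arbitrarily many
  representations. Otherwise eventually every term equals the sum of the later ones, and such a
  term has exactly two representations: itself, and the whole tail after it.\<close>

lemma cardv_image: "inj_on f S \<Longrightarrow> cardv (f ` S) = cardv S"
  unfolding cardv_def
  using finite_image_iff[of f S] card_image[of f S] countable_image[of S f] countable_image_inj_on[of f S]
  by auto

lemma bij_card_predecessors:
  fixes less :: "nat \<Rightarrow> nat \<Rightarrow> bool"
  assumes trans: "\<And>a b c. less a b \<Longrightarrow> less b c \<Longrightarrow> less a c"
    and irrefl: "\<And>a. \<not> less a a"
    and total: "\<And>a b. a \<noteq> b \<Longrightarrow> less a b \<or> less b a"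
    and finite_pred: "\<And>b. finite {a. less a b}"
  defines "rk b \<equiv> card {a. less a b}"
  shows "bij rk" and "less a b \<Longrightarrow> rk a < rk b"
proof -
  show less: "rk a < rk b" if "less a b" for a b
  proof -
    have "{c. less c a} \<subseteq> {c. less c b}"
      using that trans by blast
    moreover have "a \<in> {c. less c b} - {c. less c a}"
      using that irrefl by simp
    ultimately have "{c. less c a} \<subset> {c. less c b}"
      by blast
    then show ?thesis
      unfolding rk_def using psubset_card_mono finite_pred by blast
  qed
  have "inj rk"
  proof (rule injI, rule ccontr)
    fix a b assume "rk a = rk b" "a \<noteq> b"
    then show False
      using total[of a b] less[of a b] less[of b a] by auto
  qed
  moreover have "k \<in> range rk" for k
  proof -
    have "infinite (range rk)"
      using finite_imageD[OF _ \<open>inj rk\<close>] by auto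
    then obtain n where "k < n" "n \<in> range rk"
      unfolding infinite_nat_iff_unbounded by blast
    then obtain b where b: "k < rk b"
      by auto
    have "rk ` {a. less a b} \<subseteq> {..<rk b}"
      using less by auto
    moreover have "card (rk ` {a. less a b}) = rk b"
      using card_image inj_on_subset[OF \<open>inj rk\<close>] unfolding rk_def by auto
    ultimately have "rk ` {a. less a b} = {..<rk b}"
      by (intro card_subset_eq) auto
    with b show ?thesis by auto
  qed
  ultimately show "bij rk"
    by (auto simp: bij_def)
qed

lemma exists_decreasing_rearrangement:
  fixes x :: "nat \<Rightarrow> real"
  assumes pos: "\<And>n. x n > 0" and lim: "x \<longlonglongrightarrow> 0"
  obtains \<sigma> where "bij \<sigma>" "decseq (x \<circ> \<sigma>)"
proof -
  define less where "less a b \<longleftrightarrow> x b < x a \<or> (x a = x b \<and> a < b)" for a b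
  have "finite {a. less a b}" for b
  proof -
    obtain N where N: "\<And>n. n \<ge> N \<Longrightarrow> x n < x b"
      using order_tendstoD(2)[OF lim pos[of b]] unfolding eventually_sequentially by blast
    have "{a. less a b} \<subseteq> {..<N}"
    proof
      fix a assume "a \<in> {a. less a b}"
      then have "\<not> x a < x b"
        unfolding less_def by auto
      then show "a \<in> {..<N}"
        using N[of a] by (cases "a < N") auto
    qed
    then show ?thesis
      using finite_subset by blast
  qed
  moreover have "\<And>a b c. less a b \<Longrightarrow> less b c \<Longrightarrow> less a c" "\<And>a. \<not> less a a"
    "\<And>a b. a \<noteq> b \<Longrightarrow> less a b \<or> less b a"
    unfolding less_def by auto
  ultimately have rank: "bij (\<lambda>b. card {a. less a b})"
    "\<And>a b. less a b \<Longrightarrow> card {c. less c a} < card {c. less c b}"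
    using bij_card_predecessors[of less] by blast+
  define \<sigma> where "\<sigma> = inv (\<lambda>b. card {a. less a b})"
  have rank_\<sigma>: "card {a. less a (\<sigma> k)} = k" for k
    using surj_f_inv_f[OF bij_is_surj[OF rank(1)], of k] unfolding \<sigma>_def by simp
  have "x (\<sigma> n) \<le> x (\<sigma> m)" if "m \<le> n" for m n
  proof -
    have "\<not> less (\<sigma> n) (\<sigma> m)"
      using rank(2)[of "\<sigma> n" "\<sigma> m"] that rank_\<sigma> by auto
    then show ?thesis
      unfolding less_def by auto
  qed
  then have "decseq (x \<circ> \<sigma>)"
    unfolding decseq_def by simp
  moreover have "bij \<sigma>"
    unfolding \<sigma>_def using rank(1) by (rule bij_imp_bij_inv)
  ultimately show ?thesis
    using that by blast
qed

lemma not_bounded_cv_if_many_representations: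
  assumes "\<And>j. \<exists>t S. S \<subseteq> {A. subsum x A = t} \<and> finite S \<and> card S = Suc j"
  shows "\<not> bounded_cv (cardinal_fun x ` achievement_set x)"
proof
  assume "bounded_cv (cardinal_fun x ` achievement_set x)"
  then obtain N where N: "cardinal_fun x ` achievement_set x \<subseteq> Fin ` {1..N}"
    unfolding bounded_cv_def by blast
  obtain t S where S: "S \<subseteq> {A. subsum x A = t}" "finite S" "card S = Suc N"
    using assms by blast
  then have "S \<noteq> {}" by auto
  with S(1) have "t \<in> achievement_set x"
    unfolding achievement_set_def by auto
  with N obtain k where k: "cardinal_fun x t = Fin k" "k \<le> N" by force
  then have "finite {A. subsum x A = t}" "card {A. subsum x A = t} = k"
    unfolding cardinal_fun_def cardv_def by (auto split: if_splits)
  with S have "Suc N \<le> k"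
    using card_mono by metis
  with k show False by simp
qed

locale pos_summable =
  fixes y :: "nat \<Rightarrow> real"
  assumes pos: "\<And>n. y n > 0" and summable: "summable y"
begin

lemma summable_subsum_terms: "summable (\<lambda>n. if n \<in> A then y n else 0)"
  by (rule summable_comparison_test'[OF summable, of 0]) (auto simp: less_imp_le[OF pos])

lemma subsum_nonneg: "subsum y A \<ge> 0"
  unfolding subsum_def
  by (rule suminf_nonneg[OF summable_subsum_terms]) (auto simp: less_imp_le[OF pos])

lemma subsum_mono: "A \<subseteq> B \<Longrightarrow> subsum y A \<le> subsum y B"
  unfolding subsum_def
  by (rule suminf_le[OF _ summable_subsum_terms summable_subsum_terms])
     (auto simp: less_imp_le[OF pos])

lemma subsum_empty: "subsum y {} = 0"
  unfolding subsum_def by simp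

lemma subsum_insert:
  assumes "p \<notin> A"
  shows "subsum y (insert p A) = y p + subsum y A"
proof -
  have split: "(\<lambda>n. if n \<in> insert p A then y n else 0)
             = (\<lambda>n. (if n = p then y n else 0) + (if n \<in> A then y n else 0))"
    using assms by auto
  have "subsum y (insert p A) = (\<Sum>n. if n = p then y n else 0) + subsum y A"
    unfolding subsum_def split
    by (rule suminf_add[symmetric]) (auto intro: sums_summable[OF sums_single] summable_subsum_terms)
  also have "(\<Sum>n. if n = p then y n else 0) = y p"
    using sums_single[of p y] sums_unique by metis
  finally show ?thesis .
qed

lemma subsum_singleton: "subsum y {p} = y p"
  using subsum_insert[of p "{}"] subsum_empty by simp

lemma term_le_subsum: "m \<in> A \<Longrightarrow> y m \<le> subsum y A"
  using subsum_mono[of "{m}" A] subsum_singleton by auto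

lemma subsum_add_term_le:
  assumes "A \<subseteq> B" "m \<in> B" "m \<notin> A"
  shows "subsum y A + y m \<le> subsum y B"
  using subsum_mono[of "insert m A" B] subsum_insert[of m A] assms by auto

lemma subsum_reindex:
  assumes "bij \<sigma>"
  shows "subsum (y \<circ> \<sigma>) (\<sigma> -` A) = subsum y A"
proof -
  define g where "g n = (if n \<in> A then y n else 0)" for n
  have "suminf (g \<circ> \<sigma>) = suminf g"
    using assms summable_subsum_terms[of A] pos[THEN less_imp_le]
    by (intro suminf_reindex) (auto simp: g_def[abs_def] bij_def)
  moreover have "(\<lambda>n. if n \<in> \<sigma> -` A then (y \<circ> \<sigma>) n else 0) = g \<circ> \<sigma>"
    by (auto simp: g_def)
  ultimately show ?thesis
    unfolding subsum_def g_def[abs_def] by simp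
qed

lemma achievement_set_reindex:
  assumes "bij \<sigma>"
  shows "achievement_set (y \<circ> \<sigma>) = achievement_set y"
proof -
  have "subsum (y \<circ> \<sigma>) B = subsum y (\<sigma> ` B)" for B
    using subsum_reindex[OF assms, of "\<sigma> ` B"] assms by (simp add: bij_def inj_vimage_image_eq)
  then show ?thesis
    unfolding achievement_set_def by (metis subsum_reindex[OF assms])
qed

lemma cardinal_fun_reindex:
  assumes "bij \<sigma>"
  shows "cardinal_fun (y \<circ> \<sigma>) = cardinal_fun y"
proof
  fix t
  have inj: "inj_on (\<lambda>A. \<sigma> -` A) X" for X
    using assms by (intro inj_onI) (metis bij_def surj_image_vimage_eq)
  have "{B. subsum (y \<circ> \<sigma>) B = t} = (\<lambda>A. \<sigma> -` A) ` {A. subsum y A = t}"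
  proof (intro equalityI subsetI)
    fix B assume "B \<in> {B. subsum (y \<circ> \<sigma>) B = t}"
    moreover have "B = \<sigma> -` (\<sigma> ` B)"
      using assms by (simp add: bij_def inj_vimage_image_eq)
    ultimately show "B \<in> (\<lambda>A. \<sigma> -` A) ` {A. subsum y A = t}"
      using subsum_reindex[OF assms, of "\<sigma> ` B"] by auto
  qed (use subsum_reindex[OF assms] in auto)
  then show "cardinal_fun (y \<circ> \<sigma>) t = cardinal_fun y t"
    unfolding cardinal_fun_def using cardv_image[OF inj] by simp
qed

definition tail :: "nat \<Rightarrow> real" where
  "tail m = subsum y {m..}"

lemma tail_Suc: "tail m = y m + tail (Suc m)"
proof -
  have "{m..} = insert m {Suc m..}" by auto
  then show ?thesis
    unfolding tail_def using subsum_insert[of m "{Suc m..}"] by auto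
qed

lemma tail_pos: "tail m > 0"
  using term_le_subsum[of m "{m..}"] pos[of m] unfolding tail_def by auto

lemma tail_tendsto_zero: "tail \<longlonglongrightarrow> 0"
proof -
  have "tail = (\<lambda>m. suminf y - (\<Sum>i<m. y i))"
  proof
    fix m
    have split: "y = (\<lambda>n. (if n \<in> {m..} then y n else 0) + (if n \<in> {..<m} then y n else 0))"
      by auto
    have "suminf y = tail m + (\<Sum>n. if n \<in> {..<m} then y n else 0)"
      unfolding tail_def subsum_def
      by (subst split, rule suminf_add[symmetric])
         (use summable_subsum_terms[of "{m..}"] summable_subsum_terms[of "{..<m}"] in auto)
    moreover have "(\<Sum>n. if n \<in> {..<m} then y n else 0) = (\<Sum>i<m. y i)"
      by (subst suminf_finite[of "{..<m}"]) auto
    ultimately show "tail m = suminf y - (\<Sum>i<m. y i)" by simp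
  qed
  moreover have "(\<lambda>m. suminf y - (\<Sum>i<m. y i)) \<longlonglongrightarrow> suminf y - suminf y"
    by (intro tendsto_intros summable_LIMSEQ summable)
  ultimately show ?thesis by simp
qed

text \<open>Kakeya's greedy argument: take each term from index \<open>n\<close> on whenever it still fits below \<open>t\<close>;
  the hypothesis guarantees that a skipped term leaves a gap of at most the remaining tail.\<close>
lemma subsums_of_tail_fill_interval:
  assumes slow: "\<And>m. m \<ge> n \<Longrightarrow> y m \<le> tail (Suc m)" and t: "0 \<le> t" "t \<le> tail n"
  shows "\<exists>C \<subseteq> {n..}. subsum y C = t"
proof -
  define s where "s = rec_nat 0 (\<lambda>m v. v + (if n \<le> m \<and> v + y m \<le> t then y m else 0))"
  have s_0: "s 0 = 0"
    and s_Suc: "\<And>m. s (Suc m) = s m + (if n \<le> m \<and> s m + y m \<le> t then y m else 0)"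
    unfolding s_def by auto
  define C where "C = {m. n \<le> m \<and> s m + y m \<le> t}"
  have s_eq: "s m = (\<Sum>i<m. if i \<in> C then y i else 0)" for m
    by (induction m) (simp_all add: s_0 s_Suc C_def)
  have "s n = 0"
    unfolding s_eq by (simp add: C_def)
  have invariant: "s m \<le> t \<and> t \<le> s m + tail m" if "n \<le> m" for m
    using that
  proof (induction m rule: dec_induct)
    case base
    then show ?case using \<open>s n = 0\<close> t by simp
  next
    case (step m)
    then show ?case
      using tail_Suc[of m] slow[of m] by (cases "s m + y m \<le> t") (simp_all add: s_Suc)
  qed
  have "s \<longlonglongrightarrow> subsum y C"
    unfolding subsum_def s_eq[abs_def] by (rule summable_LIMSEQ[OF summable_subsum_terms])
  moreover have "s \<longlonglongrightarrow> t"
  proof (rule tendsto_sandwich[of "\<lambda>m. t - tail m" _ _ "\<lambda>_. t"])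
    show "\<forall>\<^sub>F m in sequentially. t - tail m \<le> s m" "\<forall>\<^sub>F m in sequentially. s m \<le> t"
      by (auto simp: eventually_at_top_linorder intro!: exI[of _ n] dest!: invariant)
    show "(\<lambda>m. t - tail m) \<longlonglongrightarrow> t"
      using tendsto_diff[OF tendsto_const tail_tendsto_zero, of t] by simp
  qed auto
  ultimately have "subsum y C = t"
    by (rule LIMSEQ_unique)
  then show ?thesis
    by (intro exI[of _ C]) (auto simp: C_def)
qed

definition tail_reps :: "nat \<Rightarrow> real \<Rightarrow> nat set set" where
  "tail_reps n t = {C. C \<subseteq> {n..} \<and> subsum y C = t}"

definition many_tail_reps :: "nat \<Rightarrow> nat \<Rightarrow> real \<Rightarrow> real \<Rightarrow> bool" where
  "many_tail_reps j n a b \<longleftrightarrow> (\<forall>t\<in>{a..b}. \<exists>S \<subseteq> tail_reps n t. finite S \<and> card S = j)"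

text \<open>Each of the \<open>j\<close> representations of \<open>t - y p\<close> above \<open>p\<close> extended by \<open>p\<close>, plus one
  representation of \<open>t\<close> itself above \<open>p\<close>.\<close>
lemma many_tail_reps_shift:
  assumes fill: "\<And>m. m \<ge> Suc p \<Longrightarrow> y m \<le> tail (Suc m)" and "n \<le> p"
    and reps: "many_tail_reps j (Suc p) a b" and "0 \<le> a" and small: "b + y p \<le> tail (Suc p)"
  shows "many_tail_reps (Suc j) n (a + y p) (b + y p)"
  unfolding many_tail_reps_def
proof
  fix t assume t: "t \<in> {a + y p..b + y p}"
  then have "t - y p \<in> {a..b}" by auto
  then obtain S where S: "S \<subseteq> tail_reps (Suc p) (t - y p)" "finite S" "card S = j"
    using reps unfolding many_tail_reps_def by blast
  have "0 \<le> t" "t \<le> tail (Suc p)"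
    using t \<open>0 \<le> a\<close> pos[of p] small by auto
  then obtain D where D: "D \<subseteq> {Suc p..}" "subsum y D = t"
    using subsums_of_tail_fill_interval[OF fill] by blast
  have S_above: "C \<subseteq> {Suc p..}" if "C \<in> S" for C
    using S(1) that unfolding tail_reps_def by blast
  have p_notin: "p \<notin> C" if "C \<in> S" for C
    using S_above[OF that] by auto
  have "inj_on (insert p) S"
    using insert_ident[OF p_notin p_notin] by (intro inj_onI) blast
  moreover have "D \<notin> insert p ` S"
    using D(1) by auto
  ultimately have "card (insert D (insert p ` S)) = Suc j"
    using S by (simp add: card_image)
  moreover have "insert D (insert p ` S) \<subseteq> tail_reps n t"
  proof -
    have "insert p C \<in> tail_reps n t" if "C \<in> S" for C
      using S(1) S_above[OF that] that subsum_insert[OF p_notin[OF that]] \<open>n \<le> p\<close>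
      unfolding tail_reps_def by auto
    moreover have "D \<in> tail_reps n t"
      using D \<open>n \<le> p\<close> unfolding tail_reps_def by auto
    ultimately show ?thesis by blast
  qed
  ultimately show "\<exists>S' \<subseteq> tail_reps n t. finite S' \<and> card S' = Suc j"
    using S(2) by blast
qed

lemma many_tail_reps_near_zero:
  assumes fill: "\<And>m. m \<ge> K \<Longrightarrow> y m \<le> tail (Suc m)"
    and strict: "\<And>n. \<exists>p \<ge> n. y p < tail (Suc p)"
  shows "n \<ge> K \<Longrightarrow> \<epsilon> > 0 \<Longrightarrow> \<exists>a b. 0 \<le> a \<and> a < b \<and> b \<le> \<epsilon> \<and> many_tail_reps j n a b"
proof (induction j arbitrary: n \<epsilon>)
  case 0
  then show ?case
    by (intro exI[of _ 0] exI[of _ \<epsilon>]) (auto simp: many_tail_reps_def)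
next
  case (Suc j)
  obtain m0 where m0: "\<And>m. m \<ge> m0 \<Longrightarrow> tail m < \<epsilon>"
    using order_tendstoD(2)[OF tail_tendsto_zero \<open>\<epsilon> > 0\<close>] unfolding eventually_sequentially by blast
  obtain p where p: "p \<ge> max n m0" "y p < tail (Suc p)"
    using strict by blast
  moreover have "Suc p \<ge> K"
    using Suc.prems p by simp
  ultimately obtain a b where ab: "0 \<le> a" "a < b" "b \<le> tail (Suc p) - y p" "many_tail_reps j (Suc p) a b"
    using Suc.IH[of "Suc p" "tail (Suc p) - y p"] by auto
  have "many_tail_reps (Suc j) n (a + y p) (b + y p)"
    using Suc.prems p ab by (intro many_tail_reps_shift[OF fill]) auto
  moreover have "b + y p \<le> \<epsilon>"
    using ab m0[of "Suc p"] p by auto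
  ultimately show ?case
    using ab pos[of p] by (intro exI[of _ "a + y p"] exI[of _ "b + y p"]) auto
qed

text \<open>Near \<open>0\<close> the achievement set has no gaps, and a term exceeding the tail after it would
  leave the gap \<open>(tail (Suc n), y n)\<close>.\<close>
lemma term_le_tail_if_small:
  assumes "decseq y" and interval: "{0..\<delta>} \<subseteq> achievement_set y" and "y n \<le> \<delta>"
  shows "y n \<le> tail (Suc n)"
proof (rule ccontr)
  assume gap: "\<not> y n \<le> tail (Suc n)"
  define t where "t = (tail (Suc n) + y n) / 2"
  have t: "tail (Suc n) < t" "t < y n"
    using gap unfolding t_def by auto
  then have "t \<in> {0..\<delta>}"
    using tail_pos[of "Suc n"] \<open>y n \<le> \<delta>\<close> by auto
  then obtain A where A: "subsum y A = t"
    using interval unfolding achievement_set_def by auto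
  have "A \<subseteq> {Suc n..}"
  proof
    fix m assume "m \<in> A"
    then have "y m < y n"
      using term_le_subsum[of m A] A t by simp
    then show "m \<in> {Suc n..}"
      using decseqD[OF \<open>decseq y\<close>, of m n] by (cases "m \<le> n") auto
  qed
  then have "t \<le> tail (Suc n)"
    using subsum_mono A unfolding tail_def by blast
  with t show False by simp
qed

lemma representations_of_term_eq_tail:
  assumes larger: "\<And>m. m < q \<Longrightarrow> y q < y m" and eq: "y q = tail (Suc q)"
  shows "{A. subsum y A = y q} = {{q}, {Suc q..}}"
proof (intro equalityI subsetI)
  fix A assume "A \<in> {A. subsum y A = y q}"
  then have A: "subsum y A = y q" by simp
  have A_above: "A \<subseteq> {q..}"
  proof
    fix m assume "m \<in> A"
    then have "\<not> y q < y m"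
      using term_le_subsum[of m A] A by simp
    then show "m \<in> {q..}"
      using larger[of m] by (cases "m < q") auto
  qed
  show "A \<in> {{q}, {Suc q..}}"
  proof (cases "q \<in> A")
    case True
    have "A = {q}"
    proof (rule ccontr)
      assume "A \<noteq> {q}"
      then obtain m where "m \<in> A" "m \<noteq> q" using True by blast
      then have "subsum y {q} + y m \<le> subsum y A"
        using True by (intro subsum_add_term_le) auto
      then show False
        using A pos[of m] subsum_singleton by simp
    qed
    then show ?thesis by simp
  next
    case False
    have A_sub: "A \<subseteq> {Suc q..}"
    proof
      fix m assume "m \<in> A"
      then have "q \<le> m" "m \<noteq> q"
        using A_above False by auto
      then show "m \<in> {Suc q..}" by simp
    qed
    have "A = {Suc q..}"
    proof (rule ccontr)
      assume "A \<noteq> {Suc q..}"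
      then obtain m where "m \<in> {Suc q..}" "m \<notin> A" using A_sub by blast
      then have "subsum y A + y m \<le> tail (Suc q)"
        unfolding tail_def using A_sub by (intro subsum_add_term_le) auto
      then show False
        using A eq pos[of m] by simp
    qed
    then show ?thesis by simp
  qed
qed (use subsum_singleton eq in \<open>auto simp: tail_def\<close>)

lemma cardinal_fun_term_eq_tail:
  assumes "\<And>m. m < q \<Longrightarrow> y q < y m" and "y q = tail (Suc q)"
  shows "cardinal_fun y (y q) = Fin 2"
proof -
  have "Suc q \<in> {Suc q..} - {q}"
    by simp
  then have "{q} \<noteq> {Suc q..}"
    by blast
  then show ?thesis
    using representations_of_term_eq_tail[OF assms] by (simp add: cardinal_fun_def cardv_def)
qed

lemma achievement_set_initial_interval:
  assumes "finite_union_of_intervals (achievement_set y)"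
  obtains \<delta> where "\<delta> > 0" "{0..\<delta>} \<subseteq> achievement_set y"
proof -
  obtain F where F: "\<forall>(a, b)\<in>F. a < b" "achievement_set y = (\<Union>(a, b)\<in>F. {a..b})"
    using assms unfolding finite_union_of_intervals_def by blast
  have "0 \<in> achievement_set y"
    unfolding achievement_set_def using subsum_empty by (auto intro: exI[of _ "{}"])
  then obtain a b where ab: "(a, b) \<in> F" "a \<le> 0" "0 \<le> b"
    using F(2) by auto
  then have interval: "{a..b} \<subseteq> achievement_set y"
    using F(2) by auto
  have "a < b"
    using F(1) ab(1) by auto
  then have "a \<in> achievement_set y"
    using interval by auto
  then have "0 \<le> a"
    using subsum_nonneg unfolding achievement_set_def by auto
  with ab(2) have "a = 0"
    by simp
  with interval \<open>a < b\<close> show ?thesis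
    using that by auto
qed

lemma decreasing_cardinal_range:
  assumes "decseq y" and "\<delta> > 0" and interval: "{0..\<delta>} \<subseteq> achievement_set y"
  shows "Fin 2 \<in> cardinal_fun y ` achievement_set y \<or> \<not> bounded_cv (cardinal_fun y ` achievement_set y)"
proof -
  obtain K where K: "\<And>n. n \<ge> K \<Longrightarrow> y n < \<delta>"
    using order_tendstoD(2)[OF summable_LIMSEQ_zero[OF summable] \<open>\<delta> > 0\<close>]
    unfolding eventually_sequentially by blast
  have fill: "y m \<le> tail (Suc m)" if "m \<ge> K" for m
    using term_le_tail_if_small[OF \<open>decseq y\<close> interval] K[OF that] by simp
  show ?thesis
  proof (cases "\<forall>n. \<exists>p \<ge> n. y p < tail (Suc p)")
    case True
    have "\<exists>t S. S \<subseteq> {A. subsum y A = t} \<and> finite S \<and> card S = Suc j" for j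
    proof -
      have "\<exists>a b. 0 \<le> a \<and> a < b \<and> b \<le> 1 \<and> many_tail_reps (Suc j) K a b"
        by (rule many_tail_reps_near_zero[where K=K]) (use fill True in simp_all)
      then obtain a b where "a < b" and reps: "many_tail_reps (Suc j) K a b"
        by blast
      then have "a \<in> {a..b}"
        by simp
      then obtain S where S: "S \<subseteq> tail_reps K a" "finite S" "card S = Suc j"
        using reps unfolding many_tail_reps_def by blast
      moreover have "S \<subseteq> {A. subsum y A = a}"
        using S(1) unfolding tail_reps_def by auto
      ultimately show ?thesis
        by (intro exI[of _ a] exI[of _ S]) simp
    qed
    then show ?thesis
      using not_bounded_cv_if_many_representations by blast
  next
    case False
    then obtain n0 where n0: "\<And>p. p \<ge> n0 \<Longrightarrow> \<not> y p < tail (Suc p)"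
      by auto
    define q where "q = Suc (max n0 K)"
    have eq: "y p = tail (Suc p)" if "p \<ge> max n0 K" for p
    proof -
      have "p \<ge> n0" "p \<ge> K"
        using that by auto
      then show ?thesis
        using n0[of p] fill[of p] by linarith
    qed
    have "y q < y m" if "m < q" for m
    proof -
      have "y q < y (max n0 K)"
        using eq[of "max n0 K"] tail_Suc[of q] tail_pos[of "Suc q"] unfolding q_def by simp
      also have "\<dots> \<le> y m"
        using decseqD[OF \<open>decseq y\<close>, of m "max n0 K"] that unfolding q_def by simp
      finally show ?thesis .
    qed
    moreover have "y q = tail (Suc q)"
      by (rule eq) (simp add: q_def le_SucI)
    ultimately have "cardinal_fun y (y q) = Fin 2"
      by (rule cardinal_fun_term_eq_tail)
    moreover have "y q \<in> achievement_set y"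
      unfolding achievement_set_def using subsum_singleton by (auto intro: exI[of _ "{q}"])
    ultimately show ?thesis
      by (intro disjI1 rev_image_eqI[of "y q"]) auto
  qed
qed

end

theorem theorem6p1:
  assumes "M \<in> I_family"
  shows "Fin 2 \<in> M \<or> \<not> bounded_cv M"
proof -
  obtain x where M: "M = cardinal_fun x ` achievement_set x" and "\<forall>n. x n > 0" "summable x"
    and intervals: "finite_union_of_intervals (achievement_set x)"
    using assms unfolding I_family_def by (auto simp only: mem_Collect_eq)
  then interpret pos_summable x
    by unfold_locales simp_all
  obtain \<delta> where "\<delta> > 0" "{0..\<delta>} \<subseteq> achievement_set x"
    using achievement_set_initial_interval[OF intervals] .
  obtain \<sigma> where \<sigma>: "bij \<sigma>" "decseq (x \<circ> \<sigma>)"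
    using exists_decreasing_rearrangement[OF pos summable_LIMSEQ_zero[OF summable]] .
  interpret sorted: pos_summable "x \<circ> \<sigma>"
  proof
    show "summable (x \<circ> \<sigma>)"
      using summable_reindex[OF summable] \<sigma>(1) pos less_imp_le bij_is_inj by blast
  qed (simp add: pos)
  have "Fin 2 \<in> cardinal_fun (x \<circ> \<sigma>) ` achievement_set (x \<circ> \<sigma>)
    \<or> \<not> bounded_cv (cardinal_fun (x \<circ> \<sigma>) ` achievement_set (x \<circ> \<sigma>))"
    using sorted.decreasing_cardinal_range[OF \<sigma>(2) \<open>\<delta> > 0\<close>]
      \<open>{0..\<delta>} \<subseteq> achievement_set x\<close> achievement_set_reindex[OF \<sigma>(1)] by simp
  then show ?thesis
    unfolding M achievement_set_reindex[OF \<sigma>(1)] cardinal_fun_reindex[OF \<sigma>(1)] .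
qed

end
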